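(* Let $q\ge 2$. The additive group $\mathbb{Z}[\tfrac1q]$ has uncountably many submonoids.
   Context: $\mathbb{Z}[\tfrac1q]=\{nq^i: n,i\in\mathbb{Z}\}$, viewed as an additive group; a submonoid is a subset containing $0$ and closed under addition. *)

theory Defs
  imports "HOL-Analysis.Analysis"
begin

definition Zinv :: "int \<Rightarrow> rat set" where
  "Zinv q = {of_int n * (of_int q) powi i | n i. True}"

definition add_submonoid_of :: "rat set \<Rightarrow> rat set \<Rightarrow> bool" where
  "add_submonoid_of G M \<longleftrightarrow> M \<subseteq> G \<and> 0 \<in> M \<and> (\<forall>x\<in>M. \<forall>y\<in>M. x + y \<in> M)"

end

theory Submission
  imports Defs
begin

text \<open>For every real r \<ge> 0 the elements of Z[1/q] exceeding r, together with 0, form a submonoid.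
  Since Z[1/q] is dense in the reals, distinct cuts r < s are separated by an element of Z[1/q]
  lying strictly between them, so these submonoids are pairwise distinct and there are
  uncountably many of them.\<close>

lemma Zinv_iff: "x \<in> Zinv q \<longleftrightarrow> (\<exists>n (k::nat). x = of_int n / of_int q ^ k)"
proof
  assume "x \<in> Zinv q"
  then obtain n i where x: "x = of_int n * of_int q powi i"
    unfolding Zinv_def by blast
  show "\<exists>n (k::nat). x = of_int n / of_int q ^ k"
  proof (cases "i \<ge> 0")
    case True
    then have "x = of_int (n * q ^ nat i) / of_int q ^ 0"
      using x by (simp add: power_int_def)
    then show ?thesis by blast
  next
    case False
    then have "x = of_int n / of_int q ^ nat (- i)"
      using x by (simp add: power_int_def field_simps)
    then show ?thesis by blast
  qed
next
  assume "\<exists>n (k::nat). x = of_int n / of_int q ^ k"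
  then obtain n and k :: nat where "x = of_int n / of_int q ^ k" by blast
  then have "x = of_int n * of_int q powi (- int k)"
    by (simp add: power_int_minus divide_inverse)
  then show "x \<in> Zinv q"
    unfolding Zinv_def by blast
qed

lemma zero_in_Zinv: "0 \<in> Zinv q"
  using Zinv_iff[of 0 q] by force

lemma Zinv_add:
  assumes "q \<noteq> 0" "x \<in> Zinv q" "y \<in> Zinv q"
  shows "x + y \<in> Zinv q"
proof -
  obtain n k where x: "x = of_int n / of_int q ^ k"
    using assms(2) Zinv_iff by blast
  obtain m l where y: "y = of_int m / of_int q ^ l"
    using assms(3) Zinv_iff by blast
  have "x + y = of_int (n * q ^ l + m * q ^ k) / of_int q ^ (k + l)"
    using assms(1) by (simp add: x y field_simps power_add)
  then show ?thesis
    using Zinv_iff by blast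
qed

lemma Zinv_dense:
  assumes "q \<ge> 2" "r < s"
  shows "\<exists>x \<in> Zinv q. r < real_of_rat x \<and> real_of_rat x < s"
proof -
  obtain k where k: "1 / (s - r) < real_of_int q ^ k"
    using assms(1) real_arch_pow[of "real_of_int q"] by auto
  define Q where "Q = real_of_int q ^ k"
  have "Q > 0"
    using assms(1) unfolding Q_def by simp
  with k assms(2) have gap: "1 < s * Q - r * Q"
    unfolding Q_def[symmetric] by (simp add: field_simps)
  define n where "n = \<lfloor>r * Q\<rfloor> + 1"
  have "r * Q < of_int n" "of_int n < s * Q"
    unfolding n_def using gap by linarith+
  with \<open>Q > 0\<close> have "r < of_int n / Q" "of_int n / Q < s"
    by (simp_all add: field_simps)
  moreover have "real_of_rat (of_int n / of_int q ^ k) = of_int n / Q"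
    unfolding Q_def by (simp add: of_rat_divide of_rat_power)
  moreover have "of_int n / of_int q ^ k \<in> Zinv q"
    using Zinv_iff by blast
  ultimately show ?thesis by metis
qed

definition Zinv_cut :: "int \<Rightarrow> real \<Rightarrow> rat set" where
  "Zinv_cut q r = insert 0 {x \<in> Zinv q. r < real_of_rat x}"

lemma add_submonoid_Zinv_cut:
  assumes "q \<noteq> 0" "r \<ge> 0"
  shows "add_submonoid_of (Zinv q) (Zinv_cut q r)"
  unfolding add_submonoid_of_def
proof (intro conjI ballI)
  fix x y
  assume "x \<in> Zinv_cut q r" "y \<in> Zinv_cut q r"
  then consider "x = 0" | "y = 0"
    | "x \<in> Zinv q" "y \<in> Zinv q" "r < real_of_rat x" "r < real_of_rat y"
    unfolding Zinv_cut_def by blast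
  then show "x + y \<in> Zinv_cut q r"
  proof cases
    case 3
    then show ?thesis
      using assms Zinv_add unfolding Zinv_cut_def by (auto simp: of_rat_add)
  qed (use \<open>x \<in> Zinv_cut q r\<close> \<open>y \<in> Zinv_cut q r\<close> in auto)
qed (use zero_in_Zinv in \<open>auto simp: Zinv_cut_def\<close>)

lemma inj_on_Zinv_cut:
  assumes "q \<ge> 2"
  shows "inj_on (Zinv_cut q) {0..}"
proof (rule linorder_inj_onI)
  fix r s :: real
  assume "r < s" "r \<in> {0..}"
  then obtain x where x: "x \<in> Zinv q" "r < real_of_rat x" "real_of_rat x < s"
    using Zinv_dense[OF assms] by blast
  then have "x \<in> Zinv_cut q r"
    unfolding Zinv_cut_def by blast
  moreover have "x \<notin> Zinv_cut q s"
    using x \<open>r \<in> {0..}\<close> unfolding Zinv_cut_def by auto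
  ultimately show "Zinv_cut q r \<noteq> Zinv_cut q s" by blast
qed auto

theorem mainTheorem9:
  fixes q :: int
  assumes "q \<ge> 2"
  shows "uncountable {M. add_submonoid_of (Zinv q) M}"
proof
  assume "countable {M. add_submonoid_of (Zinv q) M}"
  moreover have "Zinv_cut q ` {0..} \<subseteq> {M. add_submonoid_of (Zinv q) M}"
    using assms add_submonoid_Zinv_cut by auto
  ultimately have "countable (Zinv_cut q ` {0..})"
    using countable_subset by blast
  then have "countable {0::real..}"
    using countable_image_inj_on inj_on_Zinv_cut[OF assms] by blast
  then have "countable {0::real..<1}"
    by (rule countable_subset[rotated]) auto
  then show False
    using uncountable_half_open_interval_1[of 0 "1::real"] by simp
qed

end
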